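(* Consider the linear time-invariant multiple-input multiple-output (LTI MIMO) state-space model $$\alpha_{k+1}=T\alpha_k+Bx_k+\eta_k,\qquad y_k=Z\alpha_k+\beta x_k+\varepsilon_k,\qquad \begin{bmatrix}\eta_k\\ \varepsilon_k\end{bmatrix}\sim\mathcal N\!\left(\begin{bmatrix}0\\0\end{bmatrix},\begin{bmatrix}Q&S\\ S^\top&H\end{bmatrix}\right),$$ with $\alpha_k\in\mathbb R^n$, $y_k\in\mathbb R^m$, $x_k\in\mathbb R^d$, $H>0$, initial state $\alpha_0\sim\mathcal N(\bar\alpha_0,\Pi_0)$ with $\Pi_0>0$, and $\overline Q:=Q-SH^{-1}S^\top\ge 0$. Let $\overline T:=T-SH^{-1}Z$, $\overline B:=B-SH^{-1}\beta$. (Conventional filter, Algorithm 1.) Set $\hat\alpha_{0|0}=\bar\alpha_0$, $P_{0|0}=\Pi_0$, and for $k=1,\dots,N$: $\hat\alpha_{k|k-1}=\overline T\hat\alpha_{k-1|k-1}+\overline Bx_{k-1}+SH^{-1}y_{k-1}$; $P_{k|k-1}=\overline TP_{k-1|k-1}\overline T^\top+\overline Q$; $R_{e,k}=ZP_{k|k-1}Z^\top+H$; $K_k=P_{k|k-1}Z^\top R_{e,k}^{-1}$; $e_k=y_k-Z\hat\alpha_{k|k-1}-\beta x_k$; $\hat\alpha_{k|k}=\hat\alpha_{k|k-1}+K_ke_k$; $P_{k|k}=(I-K_kZ)P_{k|k-1}$. (UD-based filter, Algorithm 1a.) Take $UDU^\top$ factorizations $\Pi_0=\bar U_{\Pi_0}D_{\Pi_0}\bar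 U_{\Pi_0}^\top$, $H=\bar U_HD_H\bar U_H^\top$, $\overline Q=\bar U_{\overline Q}D_{\overline Q}\bar U_{\overline Q}^\top$; set $\hat\alpha_{0|0}=\bar\alpha_0$, $\bar U_{P_{0|0}}=\bar U_{\Pi_0}$, $D_{P_{0|0}}=D_{\Pi_0}$; and for $k=1,\dots,N$: (i) $\hat\alpha_{k|k-1}=\overline T\hat\alpha_{k-1|k-1}+\overline Bx_{k-1}+SH^{-1}y_{k-1}$; (ii) apply MWGS to the pre-arrays $\mathbb A^\top=[\,\overline T\bar U_{P_{k-1|k-1}}\ \ \bar U_{\overline Q}\,]$, $\mathbb D_A=D_{P_{k-1|k-1}}\oplus D_{\overline Q}$ and set $\bar U_{P_{k|k-1}}:=\mathbb R$, $D_{P_{k|k-1}}:=\mathbb D_R$; (iii) apply MWGS to the pre-arrays $\mathbb A^\top=\begin{bmatrix}\bar U_{P_{k|k-1}}&0\\ Z\bar U_{P_{k|k-1}}&\bar U_H\end{bmatrix}$, $\mathbb D_A=D_{P_{k|k-1}}\oplus D_H$, and read off from the post-arrays $\mathbb R=\begin{bmatrix}\bar U_{P_{k|k}}&\bar K_k^u\\0&\bar U_{R_{e,k}}\end{bmatrix}$, $\mathbb D_R=D_{P_{k|k}}\oplus D_{R_{e,k}}$ (blocks partitioned conformally with sizes $n$ and $m$); (iv) $e_k=y_k-Z\hat\alpha_{k|k-1}-\beta x_k$; (v) $\hat\alpha_{k|k}=\hat\alpha_{k|k-1}+\bar K_k^u\bar U_{R_{e,k}}^{-1}e_k$. Then Algorithm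 1a is algebraically equivalent to Algorithm 1: for every $k$, the quantities computed by Algorithm 1a satisfy $\bar U_{P_{k|k-1}}D_{P_{k|k-1}}\bar U_{P_{k|k-1}}^\top=P_{k|k-1}$, $\bar U_{R_{e,k}}D_{R_{e,k}}\bar U_{R_{e,k}}^\top=R_{e,k}$, $\bar K_k^u\bar U_{R_{e,k}}^{-1}=K_k$, $\bar U_{P_{k|k}}D_{P_{k|k}}\bar U_{P_{k|k}}^\top=P_{k|k}$, and the state estimates $\hat\alpha_{k|k-1}$, $\hat\alpha_{k|k}$ coincide with those of Algorithm 1.
   Context: A $UDU^\top$ (modified Cholesky) factorization of a symmetric positive (semi)definite matrix $P$ is $P=\bar U_PD_P\bar U_P^\top$ with $\bar U_P$ upper triangular with unit diagonal and $D_P$ diagonal. For square matrices $A,B$, $A\oplus B:=\mathrm{diag}\{A,B\}$. The modified weighted Gram–Schmidt (MWGS) step: given pre-arrays $\mathbb A\in\mathbb R^{r\times s}$ ($r\ge s$) and a diagonal $\mathbb D_A\in\mathbb R^{r\times r}$, $\mathbb D_A>0$, it returns post-arrays $\mathbb R\in\mathbb R^{s\times s}$ upper triangular with unit diagonal and $\mathbb D_R\in\mathbb R^{s\times s}$ diagonal such that $\mathbb A^\top=\mathbb R\,\mathfrak W^\top$ and $\mathfrak W^\top\mathbb D_A\mathfrak W=\mathbb D_R$ for some matrix $\mathfrak W\in\mathbb R^{r\times s}$. The algorithms are considered under the assumption that every MWGS call is well defined. *)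

theory Defs
  imports "Jordan_Normal_Form.Matrix"
begin

definition minv :: "real mat \<Rightarrow> real mat" where
  "minv A = (SOME B. B \<in> carrier_mat (dim_row A) (dim_row A) \<and>
                     A * B = 1\<^sub>m (dim_row A) \<and> B * A = 1\<^sub>m (dim_row A))"

definition sym_mat :: "real mat \<Rightarrow> bool" where
  "sym_mat A \<longleftrightarrow> A\<^sup>T = A"

definition psd :: "nat \<Rightarrow> real mat \<Rightarrow> bool" where
  "psd n A \<longleftrightarrow> A \<in> carrier_mat n n \<and> sym_mat A \<and>
     (\<forall>v \<in> carrier_vec n. v \<bullet> (A *\<^sub>v v) \<ge> 0)"

definition pd :: "nat \<Rightarrow> real mat \<Rightarrow> bool" where
  "pd n A \<longleftrightarrow> A \<in> carrier_mat n n \<and> sym_mat A \<and>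
     (\<forall>v \<in> carrier_vec n. v \<noteq> 0\<^sub>v n \<longrightarrow> v \<bullet> (A *\<^sub>v v) > 0)"

definition unit_upper :: "nat \<Rightarrow> real mat \<Rightarrow> bool" where
  "unit_upper n U \<longleftrightarrow> U \<in> carrier_mat n n \<and> upper_triangular U \<and>
     (\<forall>i<n. U $$ (i,i) = 1)"

definition diag_mat :: "nat \<Rightarrow> real mat \<Rightarrow> bool" where
  "diag_mat n D \<longleftrightarrow> D \<in> carrier_mat n n \<and> diagonal_mat D"

definition pos_diag_mat :: "nat \<Rightarrow> real mat \<Rightarrow> bool" where
  "pos_diag_mat n D \<longleftrightarrow> diag_mat n D \<and> (\<forall>i<n. D $$ (i,i) > 0)"

definition is_UDU :: "nat \<Rightarrow> real mat \<Rightarrow> real mat \<Rightarrow> real mat \<Rightarrow> bool" where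
  "is_UDU n P U D \<longleftrightarrow> unit_upper n U \<and> diag_mat n D \<and> P = U * D * U\<^sup>T"

definition dsum :: "real mat \<Rightarrow> real mat \<Rightarrow> real mat" (infixl "\<oplus>\<^sub>m" 65) where
  "A \<oplus>\<^sub>m B = four_block_mat A (0\<^sub>m (dim_row A) (dim_col B)) (0\<^sub>m (dim_row B) (dim_col A)) B"

definition MWGS :: "nat \<Rightarrow> nat \<Rightarrow> real mat \<Rightarrow> real mat \<Rightarrow> real mat \<Rightarrow> real mat \<Rightarrow> bool" where
  "MWGS r s A DA R DR \<longleftrightarrow>
     s \<le> r \<and> A \<in> carrier_mat r s \<and> pos_diag_mat r DA \<and>
     unit_upper s R \<and> diag_mat s DR \<and>
     (\<exists>W \<in> carrier_mat r s. A\<^sup>T = R * W\<^sup>T \<and> W\<^sup>T * DA * W = DR)"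

definition model_ok ::
  "nat \<Rightarrow> nat \<Rightarrow> nat \<Rightarrow> real mat \<Rightarrow> real mat \<Rightarrow> real mat \<Rightarrow> real mat \<Rightarrow> real mat \<Rightarrow> real mat
   \<Rightarrow> real mat \<Rightarrow> real vec \<Rightarrow> real mat \<Rightarrow> bool" where
  "model_ok n m d T B Z \<beta> Q S H a0 Pi0 \<longleftrightarrow>
     T \<in> carrier_mat n n \<and> B \<in> carrier_mat n d \<and> Z \<in> carrier_mat m n \<and>
     \<beta> \<in> carrier_mat m d \<and> Q \<in> carrier_mat n n \<and> S \<in> carrier_mat n m \<and> a0 \<in> carrier_vec n \<and>
     psd (n + m) (four_block_mat Q S S\<^sup>T H) \<and>
     pd m H \<and> pd n Pi0 \<and> psd n (Q - S * minv H * S\<^sup>T)"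

(* Algorithm 1 (conventional filter); indices k = 1..N.
   ap k = \<alpha>_{k|k-1}, af k = \<alpha>_{k|k}, Pp k = P_{k|k-1}, Pf k = P_{k|k}. *)
definition alg1 ::
  "nat \<Rightarrow> nat \<Rightarrow> real mat \<Rightarrow> real mat \<Rightarrow> real mat \<Rightarrow> real mat \<Rightarrow> real mat \<Rightarrow> real mat
   \<Rightarrow> real mat \<Rightarrow> real vec \<Rightarrow> real mat \<Rightarrow> (nat \<Rightarrow> real vec) \<Rightarrow> (nat \<Rightarrow> real vec)
   \<Rightarrow> (nat \<Rightarrow> real vec) \<Rightarrow> (nat \<Rightarrow> real vec) \<Rightarrow> (nat \<Rightarrow> real mat) \<Rightarrow> (nat \<Rightarrow> real mat)
   \<Rightarrow> (nat \<Rightarrow> real mat) \<Rightarrow> (nat \<Rightarrow> real mat) \<Rightarrow> (nat \<Rightarrow> real vec) \<Rightarrow> bool" where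
  "alg1 N n T B Z \<beta> Q S H a0 Pi0 x y ap af Pp Pf Rek K e \<longleftrightarrow>
     (let Tb = T - S * minv H * Z; Bb = B - S * minv H * \<beta>;
          Qb = Q - S * minv H * S\<^sup>T in
     af 0 = a0 \<and> Pf 0 = Pi0 \<and>
     (\<forall>k. 1 \<le> k \<and> k \<le> N \<longrightarrow>
        ap k = Tb *\<^sub>v af (k-1) + Bb *\<^sub>v x (k-1) + (S * minv H) *\<^sub>v y (k-1) \<and>
        Pp k = Tb * Pf (k-1) * Tb\<^sup>T + Qb \<and>
        Rek k = Z * Pp k * Z\<^sup>T + H \<and>
        K k = Pp k * Z\<^sup>T * minv (Rek k) \<and>
        e k = y k - Z *\<^sub>v ap k - \<beta> *\<^sub>v x k \<and>
        af k = ap k + K k *\<^sub>v e k \<and>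
        Pf k = (1\<^sub>m n - K k * Z) * Pp k))"

(* Algorithm 1a (UD-based filter); the MWGS post-arrays are any valid MWGS outputs. *)
definition alg1a ::
  "nat \<Rightarrow> nat \<Rightarrow> nat \<Rightarrow> real mat \<Rightarrow> real mat \<Rightarrow> real mat \<Rightarrow> real mat \<Rightarrow> real mat \<Rightarrow> real mat
   \<Rightarrow> real mat \<Rightarrow> real vec \<Rightarrow> real mat \<Rightarrow> (nat \<Rightarrow> real vec) \<Rightarrow> (nat \<Rightarrow> real vec)
   \<Rightarrow> real mat \<Rightarrow> real mat \<Rightarrow> real mat \<Rightarrow> real mat \<Rightarrow> real mat \<Rightarrow> real mat
   \<Rightarrow> (nat \<Rightarrow> real vec) \<Rightarrow> (nat \<Rightarrow> real vec)
   \<Rightarrow> (nat \<Rightarrow> real mat) \<Rightarrow> (nat \<Rightarrow> real mat) \<Rightarrow> (nat \<Rightarrow> real mat) \<Rightarrow> (nat \<Rightarrow> real mat)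
   \<Rightarrow> (nat \<Rightarrow> real mat) \<Rightarrow> (nat \<Rightarrow> real mat) \<Rightarrow> (nat \<Rightarrow> real mat)
   \<Rightarrow> (nat \<Rightarrow> real vec) \<Rightarrow> bool" where
  "alg1a N n m T B Z \<beta> Q S H a0 Pi0 x y UPi DPi UH DH UQ DQ
       ap af UPp DPp UPf DPf URe DRe Ku e \<longleftrightarrow>
     (let Tb = T - S * minv H * Z; Bb = B - S * minv H * \<beta>;
          Qb = Q - S * minv H * S\<^sup>T in
     is_UDU n Pi0 UPi DPi \<and> is_UDU m H UH DH \<and> is_UDU n Qb UQ DQ \<and>
     af 0 = a0 \<and> UPf 0 = UPi \<and> DPf 0 = DPi \<and>
     (\<forall>k. 1 \<le> k \<and> k \<le> N \<longrightarrow>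
        ap k = Tb *\<^sub>v af (k-1) + Bb *\<^sub>v x (k-1) + (S * minv H) *\<^sub>v y (k-1) \<and>
        MWGS (n + n) n (four_block_mat (Tb * UPf (k-1)) UQ
                                       (0\<^sub>m 0 n) (0\<^sub>m 0 n))\<^sup>T
             (DPf (k-1) \<oplus>\<^sub>m DQ) (UPp k) (DPp k) \<and>
        UPf k \<in> carrier_mat n n \<and> Ku k \<in> carrier_mat n m \<and>
        URe k \<in> carrier_mat m m \<and> DPf k \<in> carrier_mat n n \<and> DRe k \<in> carrier_mat m m \<and>
        MWGS (n + m) (n + m)
             (four_block_mat (UPp k) (0\<^sub>m n m) (Z * UPp k) UH)\<^sup>T
             (DPp k \<oplus>\<^sub>m DH)
             (four_block_mat (UPf k) (Ku k) (0\<^sub>m m n) (URe k))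
             (DPf k \<oplus>\<^sub>m DRe k) \<and>
        e k = y k - Z *\<^sub>v ap k - \<beta> *\<^sub>v x k \<and>
        af k = ap k + (Ku k * minv (URe k)) *\<^sub>v e k))"

end

theory Submission
  imports Defs "Jordan_Normal_Form.Determinant"
begin

(*
  MWGS only re-weights the columns of the pre-array: from A^T = R W^T and W^T D_A W = D_R one
  gets R D_R R^T = A^T D_A A, a Gram matrix with positive weights, hence positive semidefinite.
  For the time-update pre-array [Tb U, U_Q] with weights D \<oplus> D_Q, where U D U^T is the
  previous filtered covariance, this is Tb (U D U^T) Tb^T + Qb, the predicted covariance P;
  so P >= 0 and R_e = Z P Z^T + H > 0 is invertible. For the measurement-update pre-array the
  Gram matrix is the joint covariance [[P, P Z^T], [Z P, R_e]] of state and innovation, while the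
  unit upper triangular post-array [[U_f, Ku], [0, U_e]] with weights D_f \<oplus> D_e gives
  [[U_f D_f U_f^T + Ku D_e Ku^T, Ku D_e U_e^T], [_, U_e D_e U_e^T]]. Comparing blocks yields
  U_e D_e U_e^T = R_e, then Ku U_e^-1 = P Z^T R_e^-1 = K from the off-diagonal block, and
  U_f D_f U_f^T = P - K R_e K^T = (I - K Z) P from the Schur complement.
*)

lemma minv_mat:
  assumes A: "A \<in> carrier_mat n n" and det: "det A \<noteq> 0"
  shows "minv A \<in> carrier_mat n n" "A * minv A = 1\<^sub>m n" "minv A * A = 1\<^sub>m n"
proof -
  obtain B where "B \<in> carrier_mat n n" "B * A = 1\<^sub>m n" "A * B = 1\<^sub>m n"
    using det_non_zero_imp_unit[OF A det, of "()"] unfolding Units_def ring_mat_def by auto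
  then have "\<exists>B. B \<in> carrier_mat (dim_row A) (dim_row A) \<and>
      A * B = 1\<^sub>m (dim_row A) \<and> B * A = 1\<^sub>m (dim_row A)"
    using A by auto
  from someI_ex[OF this] A show "minv A \<in> carrier_mat n n" "A * minv A = 1\<^sub>m n" "minv A * A = 1\<^sub>m n"
    unfolding minv_def by auto
qed

lemma psd_congruence:
  assumes M: "psd r M" and G: "G \<in> carrier_mat k r"
  shows "psd k (G * M * G\<^sup>T)"
proof -
  have Mc: "M \<in> carrier_mat r r" and sym: "M\<^sup>T = M"
    and nonneg: "\<And>w. w \<in> carrier_vec r \<Longrightarrow> w \<bullet> (M *\<^sub>v w) \<ge> 0"
    using M unfolding psd_def sym_mat_def by auto
  have "(G * M * G\<^sup>T)\<^sup>T = G * M * G\<^sup>T"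
    using transpose_mult[of "G * M" k r "G\<^sup>T" k] transpose_mult[of G k r M r] Mc G sym by simp
  moreover have "v \<bullet> ((G * M * G\<^sup>T) *\<^sub>v v) \<ge> 0" if v: "v \<in> carrier_vec k" for v
  proof -
    have "v \<bullet> ((G * M * G\<^sup>T) *\<^sub>v v) = (G\<^sup>T *\<^sub>v v) \<bullet> (M *\<^sub>v (G\<^sup>T *\<^sub>v v))"
      using Mc G v
      by (simp add: assoc_mult_mat_vec[of _ k r _ k] assoc_mult_mat_vec[of _ r r _ k]
          transpose_vec_mult_scalar[OF G])
    then show ?thesis using nonneg G v by simp
  qed
  ultimately show ?thesis using Mc G unfolding psd_def sym_mat_def by auto
qed

lemma diag_mat_transpose: "diag_mat n D \<Longrightarrow> D\<^sup>T = D"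
  unfolding diag_mat_def diagonal_mat_def by (intro eq_matI) (auto, metis)

lemma pos_diag_mat_psd:
  assumes D: "pos_diag_mat r D"
  shows "psd r D"
proof -
  have Dc: "D \<in> carrier_mat r r" and off: "\<And>i j. i < r \<Longrightarrow> j < r \<Longrightarrow> i \<noteq> j \<Longrightarrow> D $$ (i,j) = 0"
    and pos: "\<And>i. i < r \<Longrightarrow> D $$ (i,i) > 0"
    using D unfolding pos_diag_mat_def diag_mat_def diagonal_mat_def by auto
  have quadratic_form: "w \<bullet> (D *\<^sub>v w) = (\<Sum>i<r. D $$ (i,i) * (w $ i)\<^sup>2)" if w: "w \<in> carrier_vec r" for w
  proof -
    have "(D *\<^sub>v w) $ i = D $$ (i,i) * w $ i" if i: "i < r" for i
      using Dc w i off by (simp add: scalar_prod_def sum.remove[of _ i])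
    then show ?thesis
      using Dc w by (simp add: scalar_prod_def power2_eq_square lessThan_atLeast0 algebra_simps)
  qed
  then have "w \<bullet> (D *\<^sub>v w) \<ge> 0" if "w \<in> carrier_vec r" for w
    unfolding quadratic_form[OF that] using pos
    by (intro sum_nonneg mult_nonneg_nonneg) (auto intro: less_imp_le)
  then show ?thesis
    using D diag_mat_transpose[of r D] Dc unfolding pos_diag_mat_def psd_def sym_mat_def by auto
qed

lemma pd_add_psd:
  assumes A: "psd m A" and H: "pd m H"
  shows "pd m (A + H)"
proof -
  have Ac: "A \<in> carrier_mat m m" and Hc: "H \<in> carrier_mat m m"
    using A H unfolding psd_def pd_def by auto
  have "v \<bullet> ((A + H) *\<^sub>v v) > 0" if "v \<in> carrier_vec m" "v \<noteq> 0\<^sub>v m" for v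
  proof -
    have "v \<bullet> ((A + H) *\<^sub>v v) = v \<bullet> (A *\<^sub>v v) + v \<bullet> (H *\<^sub>v v)"
      using Ac Hc that by (simp add: add_mult_distrib_mat_vec scalar_prod_add_distrib)
    then show ?thesis using A H that unfolding psd_def pd_def by fastforce
  qed
  moreover have "(A + H)\<^sup>T = A + H"
    using A H Ac Hc by (simp add: transpose_add psd_def pd_def sym_mat_def)
  ultimately show ?thesis using Ac Hc unfolding pd_def sym_mat_def by auto
qed

lemma pd_det_nonzero:
  assumes H: "pd m H"
  shows "det H \<noteq> 0"
proof
  assume "det H = 0"
  moreover have Hc: "H \<in> carrier_mat m m" using H unfolding pd_def by auto
  ultimately obtain v where "v \<in> carrier_vec m" "v \<noteq> 0\<^sub>v m" "H *\<^sub>v v = 0\<^sub>v m"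
    using det_0_iff_vec_prod_zero[OF Hc] by auto
  with H show False unfolding pd_def by fastforce
qed

lemma four_block_mat_zero_dims:
  "A \<in> carrier_mat n n \<Longrightarrow> B \<in> carrier_mat n 0 \<Longrightarrow> C \<in> carrier_mat 0 n \<Longrightarrow>
   D \<in> carrier_mat 0 0 \<Longrightarrow> four_block_mat A B C D = A"
  by (intro eq_matI) auto

lemma split_block_four_block_mat:
  assumes "A \<in> carrier_mat nr1 nc1" "B \<in> carrier_mat nr1 nc2" "C \<in> carrier_mat nr2 nc1"
    "D \<in> carrier_mat nr2 nc2"
  shows "split_block (four_block_mat A B C D) nr1 nc1 = (A, B, C, D)"
  using assms unfolding split_block_def Let_def by (auto intro!: eq_matI)

lemma four_block_mat_inject:
  assumes "A \<in> carrier_mat nr1 nc1" "B \<in> carrier_mat nr1 nc2" "C \<in> carrier_mat nr2 nc1"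
    "D \<in> carrier_mat nr2 nc2" "A' \<in> carrier_mat nr1 nc1" "B' \<in> carrier_mat nr1 nc2"
    "C' \<in> carrier_mat nr2 nc1" "D' \<in> carrier_mat nr2 nc2"
  shows "four_block_mat A B C D = four_block_mat A' B' C' D' \<longleftrightarrow>
    A = A' \<and> B = B' \<and> C = C' \<and> D = D'"
  using split_block_four_block_mat[OF assms(1-4)] split_block_four_block_mat[OF assms(5-8)]
  by (metis prod.inject)

lemma four_block_mat_dsum_congruence:
  assumes "X \<in> carrier_mat r1 c1" "Y \<in> carrier_mat r1 c2" "V \<in> carrier_mat r2 c1"
    "W \<in> carrier_mat r2 c2" "D1 \<in> carrier_mat c1 c1" "D2 \<in> carrier_mat c2 c2"
  shows "four_block_mat X Y V W * (D1 \<oplus>\<^sub>m D2) * (four_block_mat X Y V W)\<^sup>T =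
    four_block_mat (X * D1 * X\<^sup>T + Y * D2 * Y\<^sup>T) (X * D1 * V\<^sup>T + Y * D2 * W\<^sup>T)
                   (V * D1 * X\<^sup>T + W * D2 * Y\<^sup>T) (V * D1 * V\<^sup>T + W * D2 * W\<^sup>T)"
proof -
  have "four_block_mat X Y V W * (D1 \<oplus>\<^sub>m D2) = four_block_mat (X * D1) (Y * D2) (V * D1) (W * D2)"
    unfolding dsum_def using assms by (subst mult_four_block_mat) auto
  then show ?thesis
    using assms by (simp add: transpose_four_block_mat mult_four_block_mat[of _ r1 c1 _ c2 _ r2])
qed

lemma is_UDU_factors:
  assumes "is_UDU n P U D"
  shows "U \<in> carrier_mat n n" "D \<in> carrier_mat n n" "U * D * U\<^sup>T = P"
  using assms unfolding is_UDU_def unit_upper_def diag_mat_def by auto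

lemma MWGS_gram:
  assumes "MWGS r s A DA R DR"
  shows "R * DR * R\<^sup>T = A\<^sup>T * DA * A"
proof -
  obtain W where W: "W \<in> carrier_mat r s" and A: "A\<^sup>T = R * W\<^sup>T" and DR: "W\<^sup>T * DA * W = DR"
    and R: "R \<in> carrier_mat s s" and DA: "DA \<in> carrier_mat r r"
    using assms unfolding MWGS_def unit_upper_def pos_diag_mat_def diag_mat_def by blast
  have A': "A = W * R\<^sup>T"
    using arg_cong[OF A, of transpose_mat] transpose_mult[OF R, of "W\<^sup>T"] W by simp
  have "R * DR * R\<^sup>T = R * W\<^sup>T * DA * (W * R\<^sup>T)"
    unfolding DR[symmetric] using W R DA
    by (simp add: assoc_mult_mat[of _ s s _ r _ r] assoc_mult_mat[of _ s s _ r _ s]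
        assoc_mult_mat[of _ s r _ r _ s] assoc_mult_mat[of _ s s _ s _ s]
        assoc_mult_mat[of _ s r _ s _ s] assoc_mult_mat[of _ r r _ s _ s])
  also have "\<dots> = A\<^sup>T * DA * A"
    unfolding A by (subst A') (rule refl)
  finally show ?thesis .
qed

lemma MWGS_gram_psd:
  assumes "MWGS r s A DA R DR"
  shows "psd s (R * DR * R\<^sup>T)"
proof -
  have "A \<in> carrier_mat r s" "psd r DA"
    using assms pos_diag_mat_psd unfolding MWGS_def by auto
  then show ?thesis
    unfolding MWGS_gram[OF assms] using psd_congruence[of r DA "A\<^sup>T" s] by simp
qed

lemma MWGS_time_update:
  assumes M: "MWGS (n + n) n (four_block_mat (F * U) UQ (0\<^sub>m 0 n) (0\<^sub>m 0 n))\<^sup>T (D \<oplus>\<^sub>m DQ) R DR"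
    and F: "F \<in> carrier_mat n n" and U: "U \<in> carrier_mat n n" and D: "D \<in> carrier_mat n n"
    and UQ: "UQ \<in> carrier_mat n n" and DQ: "DQ \<in> carrier_mat n n"
  shows "R * DR * R\<^sup>T = F * (U * D * U\<^sup>T) * F\<^sup>T + UQ * DQ * UQ\<^sup>T"
proof -
  have FU: "F * U \<in> carrier_mat n n" using F U by simp
  have "R * DR * R\<^sup>T = four_block_mat (F * U * D * (F * U)\<^sup>T + UQ * DQ * UQ\<^sup>T)
      (F * U * D * (0\<^sub>m 0 n)\<^sup>T + UQ * DQ * (0\<^sub>m 0 n)\<^sup>T) (0\<^sub>m 0 n * D * (F * U)\<^sup>T + 0\<^sub>m 0 n * DQ * UQ\<^sup>T)
      (0\<^sub>m 0 n * D * (0\<^sub>m 0 n)\<^sup>T + 0\<^sub>m 0 n * DQ * (0\<^sub>m 0 n)\<^sup>T)"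
    unfolding MWGS_gram[OF M] transpose_transpose
    by (rule four_block_mat_dsum_congruence[OF FU UQ _ _ D DQ]) auto
  also have "\<dots> = F * U * D * (F * U)\<^sup>T + UQ * DQ * UQ\<^sup>T"
    using FU UQ D DQ by (intro four_block_mat_zero_dims) auto
  also have "\<dots> = F * (U * D * U\<^sup>T) * F\<^sup>T + UQ * DQ * UQ\<^sup>T"
    using F U D by (simp add: transpose_mult[of F n n U n] assoc_mult_mat[of _ n n _ n _ n])
  finally show ?thesis .
qed

lemma kalman_update_of_UD_blocks:
  assumes Pp: "Pp \<in> carrier_mat n n" "Pp\<^sup>T = Pp" and Z: "Z \<in> carrier_mat m n"
    and Pf: "Pf \<in> carrier_mat n n" and Ku: "Ku \<in> carrier_mat n m"
    and U: "U \<in> carrier_mat m m" and D: "D \<in> carrier_mat m m"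
    and R: "det R \<noteq> 0" "R\<^sup>T = R"
    and top: "Pf + Ku * D * Ku\<^sup>T = Pp" and off: "Ku * D * U\<^sup>T = Pp * Z\<^sup>T"
    and bottom: "U * D * U\<^sup>T = R"
  shows "Ku * minv U = Pp * Z\<^sup>T * minv R" "Pf = (1\<^sub>m n - Pp * Z\<^sup>T * minv R * Z) * Pp"
proof -
  note assoc = assoc_mult_mat[of _ n m _ m _ m] assoc_mult_mat[of _ n m _ m _ n]
    assoc_mult_mat[of _ m m _ m _ m] assoc_mult_mat[of _ n n _ m _ m] assoc_mult_mat[of _ n m _ n _ n]
    assoc_mult_mat[of _ m m _ m _ n]
  have Rc: "R \<in> carrier_mat m m" using bottom U D by auto
  have "det R = det U * det D * det U\<^sup>T"
    unfolding bottom[symmetric] using U D by (simp add: det_mult[of _ m])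
  then have "det U \<noteq> 0" using R by auto
  from minv_mat[OF U this] have Ui: "minv U \<in> carrier_mat m m" "minv U * U = 1\<^sub>m m" by auto
  from minv_mat[OF Rc R(1)] have Ri: "minv R \<in> carrier_mat m m" "R * minv R = 1\<^sub>m m" by auto
  define K where "K = Ku * minv U"
  have K: "K \<in> carrier_mat n m" using Ku Ui unfolding K_def by simp
  have KU: "K * U = Ku" unfolding K_def using Ku Ui U by (simp add: assoc)
  have KR: "K * R = Pp * Z\<^sup>T"
    unfolding off[symmetric] bottom[symmetric] KU[symmetric] using K U D by (simp add: assoc)
  show gain: "Ku * minv U = Pp * Z\<^sup>T * minv R"
  proof -
    have "K = K * R * minv R" using K Rc Ri by (simp add: assoc)
    also have "\<dots> = Pp * Z\<^sup>T * minv R" unfolding KR ..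
    finally show ?thesis unfolding K_def .
  qed
  have "Ku * D * Ku\<^sup>T = K * R * K\<^sup>T"
    unfolding KU[symmetric] bottom[symmetric] using K U D
    by (simp add: assoc transpose_mult[of K n m U m])
  also have "\<dots> = K * (K * R)\<^sup>T"
    using K Rc R(2) by (simp add: assoc transpose_mult[of K n m R m])
  also have "\<dots> = K * Z * Pp"
    unfolding KR using Pp Z K by (simp add: transpose_mult[of Pp n n "Z\<^sup>T" m] assoc)
  finally have "Pf + K * Z * Pp = Pp" using top by simp
  moreover have "Pf = Pf + K * Z * Pp - K * Z * Pp" using Pf K Z Pp by (intro eq_matI) auto
  ultimately have "Pf = Pp - K * Z * Pp" by simp
  then show "Pf = (1\<^sub>m n - Pp * Z\<^sup>T * minv R * Z) * Pp"
    unfolding gain[folded K_def, symmetric] using K Z Pp by (simp add: minus_mult_distrib_mat[of _ n n])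
qed

lemma MWGS_measurement_blocks:
  assumes M: "MWGS (n + m) (n + m) (four_block_mat UP (0\<^sub>m n m) (Z * UP) UH)\<^sup>T (DP \<oplus>\<^sub>m DH)
      (four_block_mat UPf Ku (0\<^sub>m m n) UR) (DPf \<oplus>\<^sub>m DR)"
    and Z: "Z \<in> carrier_mat m n"
    and UP: "UP \<in> carrier_mat n n" and DP: "DP \<in> carrier_mat n n"
    and UH: "UH \<in> carrier_mat m m" and DH: "DH \<in> carrier_mat m m"
    and UPf: "UPf \<in> carrier_mat n n" and DPf: "DPf \<in> carrier_mat n n" and Ku: "Ku \<in> carrier_mat n m"
    and UR: "UR \<in> carrier_mat m m" and DR: "DR \<in> carrier_mat m m"
    and P: "UP * DP * UP\<^sup>T = P" and H: "UH * DH * UH\<^sup>T = H"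
  shows "four_block_mat (UPf * DPf * UPf\<^sup>T + Ku * DR * Ku\<^sup>T) (Ku * DR * UR\<^sup>T)
      (UR * DR * Ku\<^sup>T) (UR * DR * UR\<^sup>T) = four_block_mat P (P * Z\<^sup>T) (Z * P) (Z * P * Z\<^sup>T + H)"
proof -
  have "four_block_mat (UPf * DPf * UPf\<^sup>T + Ku * DR * Ku\<^sup>T) (UPf * DPf * (0\<^sub>m m n)\<^sup>T + Ku * DR * UR\<^sup>T)
      (0\<^sub>m m n * DPf * UPf\<^sup>T + UR * DR * Ku\<^sup>T) (0\<^sub>m m n * DPf * (0\<^sub>m m n)\<^sup>T + UR * DR * UR\<^sup>T)
    = four_block_mat UP (0\<^sub>m n m) (Z * UP) UH * (DP \<oplus>\<^sub>m DH) * (four_block_mat UP (0\<^sub>m n m) (Z * UP) UH)\<^sup>T"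
    using MWGS_gram[OF M] four_block_mat_dsum_congruence[OF UPf Ku _ UR DPf DR] by simp
  also have "\<dots> = four_block_mat (UP * DP * UP\<^sup>T + 0\<^sub>m n m * DH * (0\<^sub>m n m)\<^sup>T)
      (UP * DP * (Z * UP)\<^sup>T + 0\<^sub>m n m * DH * UH\<^sup>T) (Z * UP * DP * UP\<^sup>T + UH * DH * (0\<^sub>m n m)\<^sup>T)
      (Z * UP * DP * (Z * UP)\<^sup>T + UH * DH * UH\<^sup>T)"
    using Z UP DP UH DH by (intro four_block_mat_dsum_congruence) auto
  finally show ?thesis
    unfolding P[symmetric] H[symmetric] using Z UP DP UH DH UPf DPf Ku UR DR
    by (simp add: transpose_mult[of Z m n UP n] assoc_mult_mat[of _ n n _ n _ m]
        assoc_mult_mat[of _ m n _ n _ n] assoc_mult_mat[of _ m n _ n _ m])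
qed

lemma MWGS_measurement_update:
  assumes M: "MWGS (n + m) (n + m) (four_block_mat UP (0\<^sub>m n m) (Z * UP) UH)\<^sup>T (DP \<oplus>\<^sub>m DH)
      (four_block_mat UPf Ku (0\<^sub>m m n) UR) (DPf \<oplus>\<^sub>m DR)"
    and Z: "Z \<in> carrier_mat m n"
    and UP: "UP \<in> carrier_mat n n" and DP: "DP \<in> carrier_mat n n"
    and UH: "UH \<in> carrier_mat m m" and DH: "DH \<in> carrier_mat m m"
    and UPf: "UPf \<in> carrier_mat n n" and DPf: "DPf \<in> carrier_mat n n" and Ku: "Ku \<in> carrier_mat n m"
    and UR: "UR \<in> carrier_mat m m" and DR: "DR \<in> carrier_mat m m"
    and P: "UP * DP * UP\<^sup>T = P" "psd n P" and H: "UH * DH * UH\<^sup>T = H" "pd m H"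
  shows "UR * DR * UR\<^sup>T = Z * P * Z\<^sup>T + H"
    and "Ku * minv UR = P * Z\<^sup>T * minv (Z * P * Z\<^sup>T + H)"
    and "UPf * DPf * UPf\<^sup>T = (1\<^sub>m n - P * Z\<^sup>T * minv (Z * P * Z\<^sup>T + H) * Z) * P"
proof -
  define R where "R = Z * P * Z\<^sup>T + H"
  have "pd m R" unfolding R_def using P(2) H(2) Z by (intro pd_add_psd psd_congruence)
  then have R: "R \<in> carrier_mat m m" "det R \<noteq> 0" "R\<^sup>T = R"
    using pd_det_nonzero unfolding pd_def sym_mat_def by auto
  have Pc: "P \<in> carrier_mat n n" "P\<^sup>T = P" using P(2) unfolding psd_def sym_mat_def by auto
  have "UPf * DPf * UPf\<^sup>T + Ku * DR * Ku\<^sup>T = P \<and> Ku * DR * UR\<^sup>T = P * Z\<^sup>T \<and>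
      UR * DR * Ku\<^sup>T = Z * P \<and> UR * DR * UR\<^sup>T = R"
    using MWGS_measurement_blocks[OF M Z UP DP UH DH UPf DPf Ku UR DR P(1) H(1), folded R_def]
    by (rule four_block_mat_inject[THEN iffD1, rotated 8])
      (use UPf DPf Ku UR DR Z Pc R in auto)
  then have blocks: "UPf * DPf * UPf\<^sup>T + Ku * DR * Ku\<^sup>T = P" "Ku * DR * UR\<^sup>T = P * Z\<^sup>T"
      "UR * DR * UR\<^sup>T = R"
    by blast+
  from blocks(3) show "UR * DR * UR\<^sup>T = Z * P * Z\<^sup>T + H" unfolding R_def .
  have "UPf * DPf * UPf\<^sup>T \<in> carrier_mat n n" using UPf DPf by simp
  from kalman_update_of_UD_blocks[OF Pc Z this Ku UR DR R(2,3) blocks]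
  show "Ku * minv UR = P * Z\<^sup>T * minv (Z * P * Z\<^sup>T + H)"
    and "UPf * DPf * UPf\<^sup>T = (1\<^sub>m n - P * Z\<^sup>T * minv (Z * P * Z\<^sup>T + H) * Z) * P"
    unfolding R_def .
qed

lemma alg1a_alg1_step:
  assumes model: "model_ok n m d T B Z \<beta> Q S H a0 Pi0"
    and A1: "alg1 N n T B Z \<beta> Q S H a0 Pi0 x y ap1 af1 Pp Pf Rek K e1"
    and A1a: "alg1a N n m T B Z \<beta> Q S H a0 Pi0 x y UPi DPi UH DH UQ DQ
                 ap af UPp DPp UPf DPf URe DRe Ku e"
    and k: "1 \<le> k" "k \<le> N"
    and prev: "UPf (k - 1) \<in> carrier_mat n n \<and> DPf (k - 1) \<in> carrier_mat n n \<and>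
      UPf (k - 1) * DPf (k - 1) * (UPf (k - 1))\<^sup>T = Pf (k - 1) \<and> af (k - 1) = af1 (k - 1)"
  shows "UPp k * DPp k * (UPp k)\<^sup>T = Pp k" and "URe k * DRe k * (URe k)\<^sup>T = Rek k"
    and "Ku k * minv (URe k) = K k" and "UPf k * DPf k * (UPf k)\<^sup>T = Pf k"
    and "ap k = ap1 k" and "af k = af1 k"
    and "UPf k \<in> carrier_mat n n" and "DPf k \<in> carrier_mat n n"
proof -
  from prev have U0: "UPf (k - 1) \<in> carrier_mat n n" and D0: "DPf (k - 1) \<in> carrier_mat n n"
    and P0: "UPf (k - 1) * DPf (k - 1) * (UPf (k - 1))\<^sup>T = Pf (k - 1)" and af0: "af (k - 1) = af1 (k - 1)"
    by auto
  define Tb Bb Qb where "Tb = T - S * minv H * Z" and "Bb = B - S * minv H * \<beta>"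
    and "Qb = Q - S * minv H * S\<^sup>T"
  from A1 k have ap1_k: "ap1 k = Tb *\<^sub>v af1 (k-1) + Bb *\<^sub>v x (k-1) + (S * minv H) *\<^sub>v y (k-1)"
    and Pp_k: "Pp k = Tb * Pf (k-1) * Tb\<^sup>T + Qb" and Rek_k: "Rek k = Z * Pp k * Z\<^sup>T + H"
    and K_k: "K k = Pp k * Z\<^sup>T * minv (Rek k)" and e1_k: "e1 k = y k - Z *\<^sub>v ap1 k - \<beta> *\<^sub>v x k"
    and af1_k: "af1 k = ap1 k + K k *\<^sub>v e1 k" and Pf_k: "Pf k = (1\<^sub>m n - K k * Z) * Pp k"
    unfolding alg1_def Let_def Tb_def Bb_def Qb_def by blast+
  from A1a k have UDH: "is_UDU m H UH DH" and UDQ: "is_UDU n Qb UQ DQ"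
    and ap_k: "ap k = Tb *\<^sub>v af (k-1) + Bb *\<^sub>v x (k-1) + (S * minv H) *\<^sub>v y (k-1)"
    and time_k: "MWGS (n + n) n (four_block_mat (Tb * UPf (k-1)) UQ (0\<^sub>m 0 n) (0\<^sub>m 0 n))\<^sup>T
      (DPf (k-1) \<oplus>\<^sub>m DQ) (UPp k) (DPp k)"
    and carriers: "UPf k \<in> carrier_mat n n" "Ku k \<in> carrier_mat n m" "URe k \<in> carrier_mat m m"
      "DPf k \<in> carrier_mat n n" "DRe k \<in> carrier_mat m m"
    and meas_k: "MWGS (n + m) (n + m) (four_block_mat (UPp k) (0\<^sub>m n m) (Z * UPp k) UH)\<^sup>T
      (DPp k \<oplus>\<^sub>m DH) (four_block_mat (UPf k) (Ku k) (0\<^sub>m m n) (URe k)) (DPf k \<oplus>\<^sub>m DRe k)"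
    and e_k: "e k = y k - Z *\<^sub>v ap k - \<beta> *\<^sub>v x k"
    and af_k: "af k = ap k + (Ku k * minv (URe k)) *\<^sub>v e k"
    unfolding alg1a_def Let_def Tb_def Bb_def Qb_def by blast+
  have Z: "Z \<in> carrier_mat m n" and "S \<in> carrier_mat n m" "T \<in> carrier_mat n n"
    and H: "pd m H" using model unfolding model_ok_def by auto
  then have Tb: "Tb \<in> carrier_mat n n" unfolding Tb_def by auto
  note UH = is_UDU_factors[OF UDH] and UQ = is_UDU_factors[OF UDQ]
  have UPp: "UPp k \<in> carrier_mat n n" "DPp k \<in> carrier_mat n n"
    using time_k unfolding MWGS_def unit_upper_def diag_mat_def by auto
  show Pp_UD: "UPp k * DPp k * (UPp k)\<^sup>T = Pp k"
    using MWGS_time_update[OF time_k Tb U0 D0 UQ(1,2)] unfolding Pp_k P0 UQ(3) .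
  have Pp_psd: "psd n (Pp k)" using MWGS_gram_psd[OF time_k] unfolding Pp_UD .
  note update = MWGS_measurement_update[OF meas_k Z UPp UH(1,2) carriers(1,4,2,3,5) Pp_UD Pp_psd UH(3) H]
  show "URe k * DRe k * (URe k)\<^sup>T = Rek k" "Ku k * minv (URe k) = K k"
    "UPf k * DPf k * (UPf k)\<^sup>T = Pf k"
    unfolding Pf_k K_k Rek_k by (fact update)+
  show ap_eq: "ap k = ap1 k" unfolding ap_k ap1_k af0 ..
  show "af k = af1 k" unfolding af_k af1_k e_k e1_k ap_eq update(2) K_k Rek_k ..
  show "UPf k \<in> carrier_mat n n" "DPf k \<in> carrier_mat n n" by (fact carriers)+
qed

theorem proposition1:
  fixes N n m d :: nat
    and T B Z \<beta> Q S H Pi0 :: "real mat" and a0 :: "real vec"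
    and x y :: "nat \<Rightarrow> real vec"
    and ap1 af1 :: "nat \<Rightarrow> real vec" and Pp Pf Rek K :: "nat \<Rightarrow> real mat" and e1 :: "nat \<Rightarrow> real vec"
    and UPi DPi UH DH UQ DQ :: "real mat"
    and ap af :: "nat \<Rightarrow> real vec"
    and UPp DPp UPf DPf URe DRe Ku :: "nat \<Rightarrow> real mat" and e :: "nat \<Rightarrow> real vec"
  assumes model: "model_ok n m d T B Z \<beta> Q S H a0 Pi0"
    and inputs: "\<And>k. x k \<in> carrier_vec d" "\<And>k. y k \<in> carrier_vec m"
    and A1: "alg1 N n T B Z \<beta> Q S H a0 Pi0 x y ap1 af1 Pp Pf Rek K e1"
    and A1a: "alg1a N n m T B Z \<beta> Q S H a0 Pi0 x y UPi DPi UH DH UQ DQ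
                 ap af UPp DPp UPf DPf URe DRe Ku e"
  shows "\<forall>k. 1 \<le> k \<and> k \<le> N \<longrightarrow>
           UPp k * DPp k * (UPp k)\<^sup>T = Pp k \<and>
           URe k * DRe k * (URe k)\<^sup>T = Rek k \<and>
           Ku k * minv (URe k) = K k \<and>
           UPf k * DPf k * (UPf k)\<^sup>T = Pf k \<and>
           ap k = ap1 k \<and> af k = af1 k"
proof -
  have invariant: "UPf k \<in> carrier_mat n n \<and> DPf k \<in> carrier_mat n n \<and>
      UPf k * DPf k * (UPf k)\<^sup>T = Pf k \<and> af k = af1 k" if "k \<le> N" for k
    using that
  proof (induction k)
    case 0
    from A1 have "af1 0 = a0" "Pf 0 = Pi0" unfolding alg1_def Let_def by blast+
    moreover from A1a have "is_UDU n Pi0 UPi DPi" "af 0 = a0" "UPf 0 = UPi" "DPf 0 = DPi"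
      unfolding alg1a_def Let_def by blast+
    ultimately show ?case using is_UDU_factors by auto
  next
    case (Suc k)
    then show ?case using alg1a_alg1_step[OF model A1 A1a, of "Suc k"] by simp
  qed
  show ?thesis
    using alg1a_alg1_step[OF model A1 A1a _ _ invariant] by auto
qed

end
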